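(* Consider the optimization problem: for every total allocated bandwidth $W\in(0,W_{tot}]$, choose the bandwidths $w_u>0$ and transmit powers $p_u$ of the users $u\in\mathcal{U}$ so as to maximize the energy efficiency $\textit{EE}=\frac{\sum_{u\in\mathcal{U}} T_u\,\mathbb{P}(C_u\ge T_u)}{\sum_{u\in\mathcal{U}} p_u}$, subject to (1) $p_u=\frac{gN_0\Gamma}{\ell_u}\left(2^{T_u/w_u}-1\right)w_u$ for every $u$, and (2) $\sum_{u\in\mathcal{U}} w_u=W$. The solution of this problem requires that, for the set of users experiencing the same attenuation $\ell_u$, the bandwidth $w_u$ is proportional to the traffic demand $T_u$, and as a result the power spectral density $\delta p_u\triangleq \frac{p_u}{w_u}$ is constant among these users.
   Context: Single-cell downlink OFDMA model: a base station serves a set $\mathcal{U}$ of $N_U$ users, user $u$ having data rate demand $T_u$, allocated bandwidth $w_u$ and dedicated transmit power $p_u$, with total power and bandwidth budgets $P_{tot}$ and $W_{tot}$. The user capacity is $C_u=w_u\log_2\!\left(1+\frac{1}{\Gamma}\frac{p_u h_f \ell_u}{w_u N_0}\right)$, where $\Gamma$ is the SNR gap, $N_0$ the noise power spectral density, $\ell_u$ the deterministic path-loss attenuation (known at the base station), and $h_f$ is Rayleigh fading, i.e. exponentially distributed with mean $1/\tau$. Requiring the success probability $\mathbb{P}(C_u\ge T_u)$ to equal a threshold $0<c<1$ gives the minimum required power $p_u=\frac{gN_0\Gamma}{\ell_u}\left(2^{T_u/w_u}-1\right)w_u$ with $g\triangleq \frac{\tau}{\ln(1/c)}>0$. *)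

theory Defs
  imports "HOL-Probability.Probability"
begin

text \<open>Rayleigh fading: h_f exponentially distributed with rate tau (mean 1/tau).\<close>
definition fading :: "real \<Rightarrow> real measure" where
  "fading tau = density lborel (exponential_density tau)"

definition capacity :: "real \<Rightarrow> real \<Rightarrow> real \<Rightarrow> real \<Rightarrow> real \<Rightarrow> real \<Rightarrow> real" where
  "capacity Gam N0 l w p h = w * log 2 (1 + (1 / Gam) * (p * h * l) / (w * N0))"

definition succ_prob :: "real \<Rightarrow> real \<Rightarrow> real \<Rightarrow> real \<Rightarrow> real \<Rightarrow> real \<Rightarrow> real \<Rightarrow> real" where
  "succ_prob tau Gam N0 l w p T =
     measure (fading tau) {h \<in> space (fading tau). capacity Gam N0 l w p h \<ge> T}"

definition gconst :: "real \<Rightarrow> real \<Rightarrow> real" where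
  "gconst tau c = tau / ln (1 / c)"

definition req_power :: "real \<Rightarrow> real \<Rightarrow> real \<Rightarrow> real \<Rightarrow> real \<Rightarrow> real \<Rightarrow> real" where
  "req_power g N0 Gam l T w = g * N0 * Gam / l * (2 powr (T / w) - 1) * w"

definition EE :: "'a set \<Rightarrow> real \<Rightarrow> real \<Rightarrow> real \<Rightarrow> ('a \<Rightarrow> real) \<Rightarrow> ('a \<Rightarrow> real)
                   \<Rightarrow> ('a \<Rightarrow> real) \<Rightarrow> ('a \<Rightarrow> real) \<Rightarrow> real" where
  "EE U tau Gam N0 l T w p =
     (\<Sum>u\<in>U. T u * succ_prob tau Gam N0 (l u) (w u) (p u) (T u)) / (\<Sum>u\<in>U. p u)"

definition feasible :: "'a set \<Rightarrow> real \<Rightarrow> real \<Rightarrow> real \<Rightarrow> ('a \<Rightarrow> real) \<Rightarrow> ('a \<Rightarrow> real)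
                        \<Rightarrow> real \<Rightarrow> ('a \<Rightarrow> real) \<Rightarrow> ('a \<Rightarrow> real) \<Rightarrow> bool" where
  "feasible U g N0 Gam l T W w p \<longleftrightarrow>
     (\<forall>u\<in>U. w u > 0) \<and>
     (\<forall>u\<in>U. p u = req_power g N0 Gam (l u) (T u) (w u)) \<and>
     (\<Sum>u\<in>U. w u) = W"

end

theory Submission
  imports Defs
begin

text \<open>With the minimum required power every user succeeds exactly when the fading exceeds
  \<open>1/g = ln (1/c) / \<tau>\<close>, which happens with probability \<open>c\<close>. Hence on the feasible set
  \<open>EE = c \<Sum>T / \<Sum>p\<close>, and an optimal allocation minimises the total power. The power of a user
  with attenuation \<open>\<ell>\<close> is a multiple of the perspective \<open>w (2 powr (T/w) - 1)\<close> of a strictly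
  convex function. If two users with the same attenuation had different spectral efficiencies
  \<open>T/w\<close>, splitting their joint bandwidth in proportion to their demands would keep the total
  bandwidth and strictly lower the total power, contradicting optimality.\<close>

lemma fading_tail:
  assumes "tau > 0" "x0 \<ge> 0"
  shows "measure (fading tau) {x0..} = exp (- x0 * tau)"
proof -
  interpret prob_space "fading tau" unfolding fading_def
    using prob_space_exponential_density[OF assms(1)] .
  have distr: "distributed (fading tau) lborel (\<lambda>x. x) (exponential_density tau)"
    unfolding distributed_def fading_def by (auto simp: distr_id2 cong: distr_cong)
  have "AE h in fading tau. h \<noteq> x0"
    unfolding fading_def by (subst AE_density) (use AE_lborel_singleton[of x0] in \<open>auto elim: AE_mp\<close>)
  then have "measure (fading tau) {x0..} = \<P>(h in fading tau. x0 < h)"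
    by (intro measure_eq_AE) (auto simp: fading_def)
  also have "\<dots> = exp (- x0 * tau)"
    using exponential_distributedD_gt[OF distr assms(2,1)] .
  finally show ?thesis .
qed

lemma capacity_req_power_ge_iff:
  assumes "g > 0" "N0 > 0" "Gam > 0" "l > 0" "w > 0" "T > 0" "h \<ge> 0"
  shows "T \<le> capacity Gam N0 l w (req_power g N0 Gam l T w) h \<longleftrightarrow> 1 / g \<le> h"
proof -
  define E where "E = 2 powr (T / w) - 1"
  have "E > 0" using assms by (simp add: E_def)
  have snr: "1 + (1 / Gam) * (req_power g N0 Gam l T w * h * l) / (w * N0) = 1 + g * h * E"
    using assms by (simp add: req_power_def E_def field_simps)
  have "0 < 1 + g * h * E" using assms \<open>E > 0\<close> by (simp add: add_pos_nonneg)
  have "T \<le> capacity Gam N0 l w (req_power g N0 Gam l T w) h \<longleftrightarrow> T / w \<le> log 2 (1 + g * h * E)"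
    unfolding capacity_def snr using assms by (simp add: field_simps mult.commute)
  also have "\<dots> \<longleftrightarrow> 2 powr (T / w) \<le> 1 + g * h * E"
    using \<open>0 < 1 + g * h * E\<close> by (simp add: le_log_iff)
  also have "\<dots> \<longleftrightarrow> 1 \<le> g * h"
    using \<open>E > 0\<close> unfolding E_def by (smt (verit) mult_le_cancel_right1 mult.commute)
  also have "\<dots> \<longleftrightarrow> 1 / g \<le> h"
    using assms by (simp add: field_simps)
  finally show ?thesis .
qed

lemma succ_prob_req_power:
  assumes "tau > 0" "0 < c" "c < 1" "N0 > 0" "Gam > 0" "l > 0" "w > 0" "T > 0"
  shows "succ_prob tau Gam N0 l w (req_power (gconst tau c) N0 Gam l T w) T = c"
proof -
  define g where "g = gconst tau c"
  have "g > 0" "1 / g = ln (1 / c) / tau"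
    using assms by (simp_all add: g_def gconst_def)
  have "succ_prob tau Gam N0 l w (req_power g N0 Gam l T w) T = measure (fading tau) {1 / g..}"
    unfolding succ_prob_def
  proof (rule measure_eq_AE)
    show "AE h in fading tau.
        (h \<in> {h \<in> space (fading tau). T \<le> capacity Gam N0 l w (req_power g N0 Gam l T w) h})
          = (h \<in> {1 / g..})"
      unfolding fading_def using assms \<open>g > 0\<close>
      by (subst AE_density) (auto simp: exponential_density_def capacity_req_power_ge_iff not_less)
  qed (auto simp: fading_def capacity_def)
  also have "\<dots> = exp (- ln (1 / c))"
    using assms \<open>1 / g = ln (1 / c) / tau\<close> by (simp add: fading_tail)
  also have "\<dots> = c"
    using assms by (simp add: ln_div)
  finally show ?thesis unfolding g_def .
qed

lemma powr_gt_tangent: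
  fixes b m z :: real
  assumes "0 < b" "b \<noteq> 1" "z \<noteq> m"
  shows "b powr m * (1 + (z - m) * ln b) < b powr z"
proof -
  have "(z - m) * ln b \<noteq> 0" using assms by auto
  then have "1 + (z - m) * ln b < b powr (z - m)"
    using exp_minus_greater[of "- ((z - m) * ln b)"] assms by (simp add: powr_def)
  then have "b powr m * (1 + (z - m) * ln b) < b powr m * b powr (z - m)"
    using assms by (intro mult_strict_left_mono) auto
  then show ?thesis by (simp add: powr_add[symmetric])
qed

lemma powr_weighted_mean_less:
  fixes b wu wv xu xv :: real
  assumes "0 < b" "b \<noteq> 1" "wu > 0" "wv > 0" "xu \<noteq> xv"
  shows "(wu + wv) * b powr ((wu * xu + wv * xv) / (wu + wv)) < wu * b powr xu + wv * b powr xv"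
proof -
  define m where "m = (wu * xu + wv * xv) / (wu + wv)"
  have "xu \<noteq> m" "xv \<noteq> m" using assms unfolding m_def by (auto simp: field_simps)
  then have "wu * (b powr m * (1 + (xu - m) * ln b)) + wv * (b powr m * (1 + (xv - m) * ln b))
      < wu * b powr xu + wv * b powr xv"
    using assms by (intro add_strict_mono mult_strict_left_mono powr_gt_tangent) auto
  moreover have "wu * (xu - m) + wv * (xv - m) = 0"
    using assms unfolding m_def by (simp add: field_simps)
  then have "wu * (b powr m * (1 + (xu - m) * ln b)) + wv * (b powr m * (1 + (xv - m) * ln b))
      = (wu + wv) * b powr m"
    by algebra
  ultimately show ?thesis unfolding m_def by simp
qed

lemma req_power_pos:
  assumes "g > 0" "N0 > 0" "Gam > 0" "l > 0" "T > 0" "w > 0"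
  shows "req_power g N0 Gam l T w > 0"
  using assms by (simp add: req_power_def)

lemma req_power_div_bandwidth:
  assumes "w > 0"
  shows "req_power g N0 Gam l T w / w = g * N0 * Gam / l * (2 powr (T / w) - 1)"
  using assms by (simp add: req_power_def)

lemma req_power_proportional_split_less:
  assumes "g > 0" "N0 > 0" "Gam > 0" "l > 0"
    and "Tu > 0" "Tv > 0" "wu > 0" "wv > 0" "Tu / wu \<noteq> Tv / wv"
    and s_def: "s = (Tu + Tv) / (wu + wv)"
  shows "req_power g N0 Gam l Tu (Tu / s) + req_power g N0 Gam l Tv (Tv / s)
         < req_power g N0 Gam l Tu wu + req_power g N0 Gam l Tv wv"
proof -
  define a where "a = g * N0 * Gam / l"
  have "a > 0" "s > 0" using assms by (simp_all add: a_def)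
  have proportional: "req_power g N0 Gam l T (T / s) = a * (2 powr s - 1) * (T / s)"
    if "T > 0" for T
    using that \<open>s > 0\<close> by (simp add: req_power_def a_def)
  have "Tu + Tv > 0" "wu + wv > 0" using assms by simp_all
  then have sum_bandwidth: "Tu / s + Tv / s = wu + wv"
    unfolding s_def add_divide_distrib[symmetric] by simp
  have mean: "(wu * (Tu / wu) + wv * (Tv / wv)) / (wu + wv) = s"
    using assms by (simp add: s_def)
  have "req_power g N0 Gam l Tu (Tu / s) + req_power g N0 Gam l Tv (Tv / s)
      = a * (2 powr s - 1) * (Tu / s + Tv / s)"
    unfolding proportional[OF \<open>Tu > 0\<close>] proportional[OF \<open>Tv > 0\<close>] by (simp add: distrib_left)
  also have "\<dots> = a * ((wu + wv) * 2 powr s - (wu + wv))"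
    unfolding sum_bandwidth by (simp add: algebra_simps)
  also have "\<dots> = a * ((wu + wv) * 2 powr ((wu * (Tu / wu) + wv * (Tv / wv)) / (wu + wv)) - (wu + wv))"
    unfolding mean ..
  also have "\<dots> < a * (wu * 2 powr (Tu / wu) + wv * 2 powr (Tv / wv) - (wu + wv))"
    using assms \<open>a > 0\<close>
    by (intro mult_strict_left_mono diff_strict_right_mono powr_weighted_mean_less) auto
  also have "\<dots> = req_power g N0 Gam l Tu wu + req_power g N0 Gam l Tv wv"
    by (simp add: req_power_def a_def algebra_simps add_divide_distrib)
  finally show ?thesis .
qed

lemma feasible_power_sum_pos:
  assumes "finite U" "U \<noteq> {}" "\<forall>u\<in>U. T u > 0" "\<forall>u\<in>U. l u > 0"
    and "g > 0" "N0 > 0" "Gam > 0" "feasible U g N0 Gam l T W w p"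
  shows "(\<Sum>u\<in>U. p u) > 0"
  using assms by (intro sum_pos) (auto simp: feasible_def req_power_pos)

lemma EE_feasible:
  assumes "\<forall>u\<in>U. T u > 0" "\<forall>u\<in>U. l u > 0"
    and "N0 > 0" "Gam > 0" "tau > 0" "0 < c" "c < 1"
    and "feasible U (gconst tau c) N0 Gam l T W w p"
  shows "EE U tau Gam N0 l T w p = c * (\<Sum>u\<in>U. T u) / (\<Sum>u\<in>U. p u)"
proof -
  have "(\<Sum>u\<in>U. T u * succ_prob tau Gam N0 (l u) (w u) (p u) (T u)) = (\<Sum>u\<in>U. T u * c)"
    using assms by (intro sum.cong) (auto simp: feasible_def succ_prob_req_power)
  then show ?thesis
    unfolding EE_def by (simp add: sum_distrib_left mult.commute)
qed

lemma feasible_rebalance_pair: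
  assumes "finite U" "\<forall>x\<in>U. T x > 0" "\<forall>x\<in>U. l x > 0" "g > 0" "N0 > 0" "Gam > 0"
    and feas: "feasible U g N0 Gam l T W w p"
    and "u \<in> U" "v \<in> U" "l u = l v" "T u / w u \<noteq> T v / w v"
  obtains w' p' where "feasible U g N0 Gam l T W w' p'" "(\<Sum>x\<in>U. p' x) < (\<Sum>x\<in>U. p x)"
proof -
  have "u \<noteq> v" using assms by auto
  have "w u > 0" "w v > 0" "T u > 0" "T v > 0"
    using feas assms(2) \<open>u \<in> U\<close> \<open>v \<in> U\<close> by (auto simp: feasible_def)
  define s where "s = (T u + T v) / (w u + w v)"
  define w' where "w' = w(u := T u / s, v := T v / s)"
  define p' where "p' = (\<lambda>x. req_power g N0 Gam (l x) (T x) (w' x))"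
  have "s > 0" using \<open>w u > 0\<close> \<open>w v > 0\<close> \<open>T u > 0\<close> \<open>T v > 0\<close> by (simp add: s_def)
  have "{u, v} \<subseteq> U" using assms by auto
  have split: "sum f U = sum f (U - {u, v}) + (f u + f v)" for f :: "_ \<Rightarrow> real"
    using sum.subset_diff[OF \<open>{u, v} \<subseteq> U\<close> \<open>finite U\<close>] \<open>u \<noteq> v\<close> by simp
  have "T u + T v > 0" "w u + w v > 0" using \<open>w u > 0\<close> \<open>w v > 0\<close> \<open>T u > 0\<close> \<open>T v > 0\<close> by simp_all
  then have "T u / s + T v / s = w u + w v"
    unfolding s_def add_divide_distrib[symmetric] by simp
  then have "(\<Sum>x\<in>U. w' x) = (\<Sum>x\<in>U. w x)"
    unfolding split[of w'] split[of w] using \<open>u \<noteq> v\<close> by (simp add: w'_def)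
  moreover have "\<forall>x\<in>U. w' x > 0"
    using feas \<open>s > 0\<close> assms(2) by (auto simp: w'_def feasible_def)
  ultimately have feas': "feasible U g N0 Gam l T W w' p'"
    using feas by (simp add: feasible_def p'_def)
  have "p' u + p' v < p u + p v"
    using feas assms \<open>u \<noteq> v\<close> \<open>w u > 0\<close> \<open>w v > 0\<close> \<open>T u > 0\<close> \<open>T v > 0\<close> s_def
      req_power_proportional_split_less[of g N0 Gam "l v" "T u" "T v" "w u" "w v" s]
    by (simp add: p'_def w'_def feasible_def)
  moreover have "(\<Sum>x\<in>U - {u, v}. p' x) = (\<Sum>x\<in>U - {u, v}. p x)"
    using feas by (intro sum.cong) (auto simp: p'_def w'_def feasible_def)
  ultimately have "(\<Sum>x\<in>U. p' x) < (\<Sum>x\<in>U. p x)"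
    unfolding split[of p'] split[of p] by simp
  with feas' show ?thesis by (rule that)
qed

theorem theorem1:
  fixes U :: "'a set" and T l w p :: "'a \<Rightarrow> real"
    and N0 Gam tau c W Wtot Ptot :: real
  assumes "finite U" and "U \<noteq> {}"
    and "\<forall>u\<in>U. T u > 0" and "\<forall>u\<in>U. l u > 0"
    and "N0 > 0" and "Gam > 0" and "tau > 0" and "0 < c" and "c < 1"
    and "0 < W" and "W \<le> Wtot"
    and opt_feas: "feasible U (gconst tau c) N0 Gam l T W w p"
    and opt_max: "\<forall>w' p'. feasible U (gconst tau c) N0 Gam l T W w' p' \<longrightarrow>
                      EE U tau Gam N0 l T w' p' \<le> EE U tau Gam N0 l T w p"
  shows "\<forall>u\<in>U. \<forall>v\<in>U. l u = l v \<longrightarrow>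
           w u / T u = w v / T v \<and> p u / w u = p v / w v"
proof (intro ballI impI)
  fix u v assume "u \<in> U" "v \<in> U" "l u = l v"
  have "gconst tau c > 0" using assms by (simp add: gconst_def)
  have "T u / w u = T v / w v"
  proof (rule ccontr)
    assume "T u / w u \<noteq> T v / w v"
    then obtain w' p' where feas': "feasible U (gconst tau c) N0 Gam l T W w' p'"
      and less: "(\<Sum>x\<in>U. p' x) < (\<Sum>x\<in>U. p x)"
      using feasible_rebalance_pair[OF \<open>finite U\<close> assms(3,4) \<open>gconst tau c > 0\<close> assms(5,6)
          opt_feas \<open>u \<in> U\<close> \<open>v \<in> U\<close> \<open>l u = l v\<close>] by blast
    have "c * (\<Sum>x\<in>U. T x) > 0" using assms by (intro mult_pos_pos sum_pos) auto
    then have "EE U tau Gam N0 l T w p < EE U tau Gam N0 l T w' p'"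
      using less feasible_power_sum_pos[OF assms(1-4) \<open>gconst tau c > 0\<close> assms(5,6) feas']
      unfolding EE_feasible[OF assms(3-9) opt_feas] EE_feasible[OF assms(3-9) feas']
      by (intro divide_strict_left_mono) auto
    with opt_max feas' show False by fastforce
  qed
  moreover have psd: "p x / w x = gconst tau c * N0 * Gam / l x * (2 powr (T x / w x) - 1)"
    if "x \<in> U" for x
    using opt_feas that by (simp add: feasible_def req_power_div_bandwidth)
  ultimately show "w u / T u = w v / T v \<and> p u / w u = p v / w v"
    unfolding psd[OF \<open>u \<in> U\<close>] psd[OF \<open>v \<in> U\<close>] \<open>l u = l v\<close> by (metis inverse_divide)
qed

end
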